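(* For the Rogers--Szeg\H{o} polynomials, we have \[ \mu_{n,r,s} = \sum_{j=0}^r (-1)^{r-j}\begin{bmatrix} r \\ j \end{bmatrix}_q \begin{bmatrix} n+j \\ s \end{bmatrix}_q q^{\frac{r-j}{2}}q^{\frac{(n+j-s)^2}{2}}, \] where \( \begin{bmatrix} n \\ m \end{bmatrix}_q \) is the \( q \)-binomial coefficient given by \( \begin{bmatrix} n \\ m \end{bmatrix}_q =\frac{(1-q^n)(1-q^{n-1})\cdots(1-q^{n-m+1})}{(1-q^m)(1-q^{m-1})\cdots(1-q)} \).
   Context: Let \( (\Phi_n(z))_{n\ge0} \) be monic orthogonal polynomials on the unit circle (OPUC) with \( \deg\Phi_n=n \), \( \Phi_0=1 \), satisfying Szeg\H{o}'s recurrence \( \Phi_{n+1}(z) = z\Phi_n(z) - \overline{\alpha_n}\Phi_n^*(z) \), where \( \Phi_n^*(z)=z^n\overline{\Phi_n}(1/z) \) is the reverse polynomial and \( (\alpha_n)_{n\ge0} \) are the Verblunsky coefficients with \( |\alpha_n|<1 \). They are orthogonal with respect to the linear functional \( \mathcal{L} \) on Laurent polynomials with \( \mathcal{L}(1)=1 \) and \( \mathcal{L}(\Phi_m(z)\overline{\Phi_n}(1/z))=\kappa_n\delta_{m,n} \), \( \kappa_n>0 \). Define the inner product \( \langle f(z),g(z)\rangle=\mathcal{L}(f(z)\overline{g}(1/z)) \) and, for nonnegative integers \( n,r,s \), the generalized moment \( \mu_{n,r,s}=\langle \Phi_s(z),z^n\Phi_r(z)\rangle/\langle\Phi_s(z),\Phi_s(z)\rangle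 \). For \( q\in(0,1) \), the Rogers--Szeg\H{o} polynomials are the OPUC with Verblunsky coefficients \( \alpha_n=(-1)^nq^{(n+1)/2} \), \( n\ge0 \). *)

theory Defs
  imports Complex_Main "HOL-Computational_Algebra.Polynomial"
begin

text \<open>Reverse polynomial of degree n: star n p (z) = z^n * conj(p)(1/z).\<close>
definition opuc_star :: "nat \<Rightarrow> complex poly \<Rightarrow> complex poly" where
  "opuc_star n p = (\<Sum>k\<le>n. monom (cnj (coeff p (n - k))) k)"

text \<open>Monic OPUC from Verblunsky coefficients via the Szego recurrence.\<close>
fun opuc_Phi :: "(nat \<Rightarrow> complex) \<Rightarrow> nat \<Rightarrow> complex poly" where
  "opuc_Phi \<alpha> 0 = 1"
| "opuc_Phi \<alpha> (Suc n) =
     pCons 0 (opuc_Phi \<alpha> n) - smult (cnj (\<alpha> n)) (opuc_star n (opuc_Phi \<alpha> n))"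

text \<open>A linear functional L on Laurent polynomials is determined by its moments
  c k = L(z^k), k an integer. The inner product <f,g> = L(f(z) conj(g)(1/z)).\<close>
definition opuc_ip :: "(int \<Rightarrow> complex) \<Rightarrow> complex poly \<Rightarrow> complex poly \<Rightarrow> complex" where
  "opuc_ip c f g = (\<Sum>i\<le>degree f. \<Sum>j\<le>degree g.
      coeff f i * cnj (coeff g j) * c (int i - int j))"

definition opuc_mu :: "(int \<Rightarrow> complex) \<Rightarrow> (nat \<Rightarrow> complex) \<Rightarrow> nat \<Rightarrow> nat \<Rightarrow> nat \<Rightarrow> complex" where
  "opuc_mu c \<alpha> n r s =
     opuc_ip c (opuc_Phi \<alpha> s) (monom 1 n * opuc_Phi \<alpha> r) /
     opuc_ip c (opuc_Phi \<alpha> s) (opuc_Phi \<alpha> s)"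

definition rogers_szego_alpha :: "real \<Rightarrow> nat \<Rightarrow> complex" where
  "rogers_szego_alpha q n = complex_of_real ((-1) ^ n * q powr ((real n + 1) / 2))"

definition qbinom :: "real \<Rightarrow> nat \<Rightarrow> nat \<Rightarrow> real" where
  "qbinom q n m = (\<Prod>i<m. 1 - q ^ (n - i)) / (\<Prod>i<m. 1 - q ^ (i + 1))"

end

theory Submission
  imports Defs
begin

text \<open>
  Iterating the Szego recurrence with the q-Pascal rule gives the explicit form
  \<open>\<Phi>\<^sub>r(z) = \<Sum>\<^sub>k (-1)\<^bsup>r-k\<^esup> [r,k]\<^sub>q q\<^bsup>(r-k)/2\<^esup> z\<^sup>k\<close> of the Rogers--Szego polynomials.
  This triangular change of basis inverts to \<open>z\<^sup>m = \<Sum>\<^sub>t [m,t]\<^sub>q q\<^bsup>(m-t)\<^sup>2/2\<^esup> \<Phi>\<^sub>t(z)\<close>: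
  by \<open>[m,t][t,k] = [m,k][m-k,m-t]\<close> the product of the two matrices reduces to
  \<open>\<Sum>\<^sub>v (-1)\<^sup>v [N,v]\<^sub>q q\<^bsup>v(v-1)/2\<^esup> = \<Prod>\<^sub>i\<^sub><\<^sub>N (1 - q\<^sup>i)\<close> (the q-binomial theorem at \<open>x = 1\<close>),
  which vanishes for \<open>N \<ge> 1\<close>. Orthogonality then gives
  \<open>\<langle>\<Phi>\<^sub>s, z\<^sup>m\<rangle> = [m,s]\<^sub>q q\<^bsup>(m-s)\<^sup>2/2\<^esup> \<kappa>\<^sub>s\<close>, and expanding \<open>z\<^sup>n \<Phi>\<^sub>r\<close> in powers of \<open>z\<close>
  yields \<open>\<mu>\<close>.
\<close>

section \<open>q-binomial coefficients\<close>

definition qpoch :: "real \<Rightarrow> nat \<Rightarrow> real" where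
  "qpoch q n = (\<Prod>i<n. 1 - q ^ Suc i)"

definition qfalling :: "real \<Rightarrow> nat \<Rightarrow> nat \<Rightarrow> real" where
  "qfalling q n k = (\<Prod>i<k. 1 - q ^ (n - i))"

lemma qbinom_eq_qfalling_div_qpoch: "qbinom q n k = qfalling q n k / qpoch q k"
  by (simp add: qbinom_def qfalling_def qpoch_def)

lemma qpoch_nonzero:
  assumes "\<bar>q\<bar> \<noteq> 1" shows "qpoch q n \<noteq> 0"
proof -
  have "q * q ^ i \<noteq> 1" for i
    using assms power_eq_1_iff[of q "Suc i"] by auto
  then show ?thesis by (simp add: qpoch_def)
qed

lemma qpoch_Suc: "qpoch q (Suc n) = qpoch q n * (1 - q ^ Suc n)"
  by (simp add: qpoch_def)

lemma qfalling_Suc: "qfalling q n (Suc k) = qfalling q n k * (1 - q ^ (n - k))"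
  by (simp add: qfalling_def)

lemma qfalling_Suc_Suc: "qfalling q (Suc n) (Suc k) = (1 - q ^ Suc n) * qfalling q n k"
  unfolding qfalling_def by (subst prod.lessThan_Suc_shift) simp

lemma qfalling_eq_0: "n < k \<Longrightarrow> qfalling q n k = 0"
  unfolding qfalling_def by (rule prod_zero) (auto intro!: bexI[of _ n])

lemma qfalling_mult_qpoch: "k \<le> n \<Longrightarrow> qfalling q n k * qpoch q (n - k) = qpoch q n"
proof (induction k)
  case 0
  then show ?case by (simp add: qfalling_def)
next
  case (Suc k)
  then have "n - k = Suc (n - Suc k)" by simp
  then have "qpoch q (n - k) = qpoch q (n - Suc k) * (1 - q ^ (n - k))"
    by (simp add: qpoch_Suc)
  with Suc show ?case by (simp add: qfalling_Suc mult_ac)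
qed

lemma qbinom_0 [simp]: "qbinom q n 0 = 1"
  by (simp add: qbinom_def)

lemma qbinom_eq_0: "n < k \<Longrightarrow> qbinom q n k = 0"
  by (simp add: qbinom_eq_qfalling_div_qpoch qfalling_eq_0)

lemma qbinom_eq_qpoch:
  assumes "\<bar>q\<bar> \<noteq> 1" "k \<le> n"
  shows "qbinom q n k = qpoch q n / (qpoch q k * qpoch q (n - k))"
  using qfalling_mult_qpoch[OF assms(2), of q] qpoch_nonzero[OF assms(1)]
  by (simp add: qbinom_eq_qfalling_div_qpoch field_simps)

lemma qbinom_self [simp]: "\<bar>q\<bar> \<noteq> 1 \<Longrightarrow> qbinom q n n = 1"
  using qbinom_eq_qpoch[of q n n] qpoch_nonzero[of q] by (simp add: qpoch_def)

lemma qbinom_symmetric: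
  assumes "\<bar>q\<bar> \<noteq> 1" "k \<le> n"
  shows "qbinom q n (n - k) = qbinom q n k"
  using assms by (simp add: qbinom_eq_qpoch mult.commute)

lemma qbinom_Suc_Suc:
  assumes "\<bar>q\<bar> \<noteq> 1"
  shows "qbinom q (Suc n) (Suc k) = qbinom q n k + q ^ Suc k * qbinom q n (Suc k)"
proof -
  have "(1 - q ^ Suc n) * qfalling q n k
      = qfalling q n k * (1 - q ^ Suc k) + q ^ Suc k * (qfalling q n k * (1 - q ^ (n - k)))"
  proof (cases "k \<le> n")
    case True
    then have "q ^ Suc k * q ^ (n - k) = q ^ Suc n"
      by (simp flip: power_add)
    then show ?thesis by (auto simp: algebra_simps)
  qed (simp add: qfalling_eq_0)
  moreover have "qpoch q k \<noteq> 0" "qpoch q (Suc k) \<noteq> 0"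
    using qpoch_nonzero[OF assms] by auto
  ultimately show ?thesis
    unfolding qbinom_eq_qfalling_div_qpoch qfalling_Suc_Suc qfalling_Suc[of q n k]
    by (simp add: qpoch_Suc field_simps)
qed

lemma qbinom_mult:
  assumes "\<bar>q\<bar> \<noteq> 1" "k \<le> m" "m \<le> n"
  shows "qbinom q n m * qbinom q m k = qbinom q n k * qbinom q (n - k) (m - k)"
proof -
  have "n - k - (m - k) = n - m" using assms by simp
  with assms qpoch_nonzero[OF assms(1)] show ?thesis
    by (simp add: qbinom_eq_qpoch field_simps)
qed

lemma Suc_choose_two: "Suc n choose 2 = (n choose 2) + n"
  by (simp add: numeral_2_eq_2)

lemma square_eq_double_choose_two_add: "n\<^sup>2 = 2 * (n choose 2) + n"
  by (induction n) (simp_all add: numeral_2_eq_2 power2_eq_square)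

theorem q_binomial_theorem:
  assumes "\<bar>q\<bar> \<noteq> 1"
  shows "(\<Prod>i<N. 1 - x * q ^ i) = (\<Sum>u\<le>N. (-1) ^ u * qbinom q N u * q ^ (u choose 2) * x ^ u)"
proof (induction N arbitrary: x)
  case 0
  then show ?case by (simp add: choose_two)
next
  case (Suc N)
  define g where "g N x u = (-1) ^ u * qbinom q N u * q ^ (u choose 2) * x ^ u" for N x u
  have "(\<Sum>u\<le>Suc N. g (Suc N) x u) = g (Suc N) x 0 + (\<Sum>u\<le>N. g (Suc N) x (Suc u))"
    by (rule sum.atMost_Suc_shift)
  also have "(\<Sum>u\<le>N. g (Suc N) x (Suc u))
      = - x * (\<Sum>u\<le>N. g N (q * x) u) + (\<Sum>u\<le>N. g N (q * x) (Suc u))"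
    unfolding g_def qbinom_Suc_Suc[OF assms] sum_distrib_left sum.distrib[symmetric]
    by (rule sum.cong) (simp_all add: Suc_choose_two power_add algebra_simps)
  also have "g (Suc N) x 0 + (- x * (\<Sum>u\<le>N. g N (q * x) u) + (\<Sum>u\<le>N. g N (q * x) (Suc u)))
      = (1 - x) * (\<Sum>u\<le>N. g N (q * x) u)"
  proof -
    have "(\<Sum>u\<le>N. g N (q * x) (Suc u)) = (\<Sum>u<N. g N (q * x) (Suc u))"
      by (simp add: lessThan_Suc_atMost[symmetric] g_def qbinom_eq_0)
    moreover have "(\<Sum>u\<le>N. g N (q * x) u) = g (Suc N) x 0 + (\<Sum>u<N. g N (q * x) (Suc u))"
      by (simp add: sum.atMost_shift g_def choose_two)
    ultimately show ?thesis by (simp add: algebra_simps)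
  qed
  also have "\<dots> = (1 - x) * (\<Prod>i<N. 1 - x * q ^ Suc i)"
    using Suc.IH[of "q * x"] by (simp add: g_def mult_ac)
  also have "\<dots> = (\<Prod>i<Suc N. 1 - x * q ^ i)"
    by (simp only: prod.lessThan_Suc_shift) simp
  finally show ?case by (simp add: g_def)
qed

lemma qbinom_alternating_sum:
  assumes "\<bar>q\<bar> \<noteq> 1"
  shows "(\<Sum>u\<le>N. (-1) ^ u * qbinom q N u * q ^ (u choose 2)) = (if N = 0 then 1 else 0)"
proof -
  have "(\<Sum>u\<le>N. (-1) ^ u * qbinom q N u * q ^ (u choose 2)) = (\<Prod>i<N. 1 - q ^ i)"
    using q_binomial_theorem[OF assms, where x = 1 and N = N] by simp
  also have "\<dots> = (if N = 0 then 1 else 0)"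
    by (auto intro!: prod_zero bexI[of _ 0])
  finally show ?thesis .
qed

section \<open>Orthogonal polynomials on the unit circle\<close>

lemma coeff_opuc_star:
  "coeff (opuc_star n p) k = (if k \<le> n then cnj (coeff p (n - k)) else 0)"
  unfolding opuc_star_def coeff_sum coeff_monom by (auto simp: if_distrib cong: if_cong)

lemma coeff_opuc_Phi_Suc:
  "coeff (opuc_Phi \<alpha> (Suc n)) k =
     (if k = 0 then 0 else coeff (opuc_Phi \<alpha> n) (k - 1))
     - cnj (\<alpha> n) * (if k \<le> n then cnj (coeff (opuc_Phi \<alpha> n) (n - k)) else 0)"
  by (simp add: coeff_pCons coeff_opuc_star split: nat.split)

lemma opuc_ip_eq_sum_atMost:
  assumes "degree f \<le> M" "degree g \<le> K"
  shows "opuc_ip c f g = (\<Sum>i\<le>M. \<Sum>j\<le>K. coeff f i * cnj (coeff g j) * c (int i - int j))"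
proof -
  have "opuc_ip c f g = (\<Sum>i\<le>degree f. \<Sum>j\<le>K. coeff f i * cnj (coeff g j) * c (int i - int j))"
    unfolding opuc_ip_def
    by (intro sum.cong refl sum.mono_neutral_left) (use assms in \<open>auto simp: coeff_eq_0\<close>)
  also have "\<dots> = (\<Sum>i\<le>M. \<Sum>j\<le>K. coeff f i * cnj (coeff g j) * c (int i - int j))"
    by (rule sum.mono_neutral_left) (use assms in \<open>auto simp: coeff_eq_0\<close>)
  finally show ?thesis .
qed

lemma opuc_ip_add_right: "opuc_ip c f (g + h) = opuc_ip c f g + opuc_ip c f h"
proof -
  let ?K = "max (degree g) (degree h)"
  have deg: "degree (g + h) \<le> ?K" "degree g \<le> ?K" "degree h \<le> ?K"
    by (auto intro: degree_add_le)
  show ?thesis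
    unfolding opuc_ip_eq_sum_atMost[OF order_refl deg(1)] opuc_ip_eq_sum_atMost[OF order_refl deg(2)]
      opuc_ip_eq_sum_atMost[OF order_refl deg(3)]
    by (simp add: sum.distrib[symmetric] algebra_simps)
qed

lemma opuc_ip_smult_right: "opuc_ip c f (smult a g) = cnj a * opuc_ip c f g"
  by (simp add: opuc_ip_eq_sum_atMost[OF order_refl degree_smult_le]
      opuc_ip_eq_sum_atMost[OF order_refl order_refl] sum_distrib_left algebra_simps)

lemma opuc_ip_sum_right:
  "finite S \<Longrightarrow> opuc_ip c f (\<Sum>x\<in>S. smult (a x) (g x)) = (\<Sum>x\<in>S. cnj (a x) * opuc_ip c f (g x))"
  by (induction S rule: finite_induct)
    (simp_all add: opuc_ip_add_right opuc_ip_smult_right opuc_ip_def[of c f 0])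

lemma opuc_mu_eq_connection_sum:
  fixes \<kappa> :: "nat \<Rightarrow> complex"
  assumes orth: "\<And>m k. opuc_ip c (opuc_Phi \<alpha> m) (opuc_Phi \<alpha> k) = (if m = k then \<kappa> k else 0)"
    and "\<kappa> s \<noteq> 0"
    and Phi_expansion: "opuc_Phi \<alpha> r = (\<Sum>k\<le>r. monom (a k) k)"
    and monom_expansion: "\<And>m. monom 1 m = (\<Sum>t\<le>m. smult (b m t) (opuc_Phi \<alpha> t))"
    and b_eq_0: "\<And>m t. m < t \<Longrightarrow> b m t = 0"
  shows "opuc_mu c \<alpha> n r s = cnj (\<Sum>k\<le>r. a k * b (n + k) s)"
proof -
  have moment: "opuc_ip c (opuc_Phi \<alpha> s) (monom 1 m) = cnj (b m s) * \<kappa> s" for m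
  proof -
    have "opuc_ip c (opuc_Phi \<alpha> s) (monom 1 m) = (\<Sum>t\<le>m. cnj (b m t) * (if s = t then \<kappa> t else 0))"
      by (subst monom_expansion) (simp add: opuc_ip_sum_right orth)
    also have "\<dots> = cnj (b m s) * \<kappa> s"
      using b_eq_0[of m s] by (cases "s \<le> m") (auto simp: if_distrib cong: if_cong)
    finally show ?thesis .
  qed
  have "monom 1 n * opuc_Phi \<alpha> r = (\<Sum>k\<le>r. smult (a k) (monom 1 (n + k)))"
    by (simp add: Phi_expansion sum_distrib_left mult_monom smult_monom)
  then have "opuc_ip c (opuc_Phi \<alpha> s) (monom 1 n * opuc_Phi \<alpha> r) = cnj (\<Sum>k\<le>r. a k * b (n + k) s) * \<kappa> s"
    by (simp add: opuc_ip_sum_right moment sum_distrib_right mult.assoc)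
  with \<open>\<kappa> s \<noteq> 0\<close> show ?thesis
    by (simp add: opuc_mu_def orth)
qed

section \<open>Rogers--Szego polynomials\<close>

lemma powr_half_eq_sqrt_power:
  assumes "0 < q" shows "q powr (real k / 2) = sqrt q ^ k"
proof -
  have "q powr (real k / 2) = (q powr (1 / 2)) powr real k" by (simp add: powr_powr)
  with assms show ?thesis by (simp add: powr_half_sqrt powr_realpow)
qed

lemma rogers_szego_alpha_eq:
  "0 < q \<Longrightarrow> rogers_szego_alpha q n = complex_of_real ((-1) ^ n * sqrt q ^ Suc n)"
  using powr_half_eq_sqrt_power[of q "Suc n"] by (simp add: rogers_szego_alpha_def add.commute)

definition rogers_szego_coeff :: "real \<Rightarrow> nat \<Rightarrow> nat \<Rightarrow> real" where
  "rogers_szego_coeff q r k = (-1) ^ (r - k) * qbinom q r k * sqrt q ^ (r - k)"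

lemma rogers_szego_coeff_eq_0: "r < k \<Longrightarrow> rogers_szego_coeff q r k = 0"
  by (simp add: rogers_szego_coeff_def qbinom_eq_0)

lemma rogers_szego_coeff_Suc:
  assumes "0 < q" "q \<noteq> 1"
  shows "rogers_szego_coeff q (Suc r) k =
     (if k = 0 then 0 else rogers_szego_coeff q r (k - 1))
     - (-1) ^ r * sqrt q ^ Suc r * (if k \<le> r then rogers_szego_coeff q r (r - k) else 0)"
proof -
  have q: "\<bar>q\<bar> \<noteq> 1" using assms by simp
  consider "k = 0" | "0 < k" "k \<le> r" | "k = Suc r" | "Suc r < k" by linarith
  then show ?thesis
  proof cases
    case 1
    with q show ?thesis by (simp add: rogers_szego_coeff_def)
  next
    case 2
    then obtain d where r: "r = k + d" using le_Suc_ex by blast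
    obtain k' where k: "k = Suc k'" using \<open>0 < k\<close> gr0_implies_Suc by blast
    have "qbinom q r (r - k) = qbinom q r k" using qbinom_symmetric[OF q 2(2)] .
    then have sym: "qbinom q (Suc (k' + d)) d = qbinom q (Suc (k' + d)) (Suc k')"
      by (simp add: r k)
    have "q ^ k = sqrt q ^ k * sqrt q ^ k" using assms by (simp flip: power_mult_distrib)
    then show ?thesis
      using q sym
      by (simp add: rogers_szego_coeff_def r k qbinom_Suc_Suc power_add algebra_simps)
  next
    case 3
    with q show ?thesis by (simp add: rogers_szego_coeff_def)
  next
    case 4
    then show ?thesis by (simp add: rogers_szego_coeff_eq_0)
  qed
qed

lemma coeff_rogers_szego_Phi:
  assumes "0 < q" "q \<noteq> 1"
  shows "coeff (opuc_Phi (rogers_szego_alpha q) r) k = complex_of_real (rogers_szego_coeff q r k)"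
proof (induction r arbitrary: k)
  case 0
  then show ?case by (simp add: rogers_szego_coeff_def qbinom_eq_0)
next
  case (Suc r)
  have "coeff (opuc_Phi (rogers_szego_alpha q) (Suc r)) k =
      (if k = 0 then 0 else complex_of_real (rogers_szego_coeff q r (k - 1)))
      - complex_of_real ((-1) ^ r * sqrt q ^ Suc r)
        * (if k \<le> r then complex_of_real (rogers_szego_coeff q r (r - k)) else 0)"
    by (simp only: coeff_opuc_Phi_Suc Suc.IH rogers_szego_alpha_eq[OF assms(1)] complex_cnj_complex_of_real)
  then show ?case by (simp add: rogers_szego_coeff_Suc[OF assms])
qed

lemma rogers_szego_Phi_eq_sum:
  assumes "0 < q" "q \<noteq> 1"
  shows "opuc_Phi (rogers_szego_alpha q) r = (\<Sum>k\<le>r. monom (complex_of_real (rogers_szego_coeff q r k)) k)"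
  by (rule poly_eqI)
    (auto simp: coeff_sum coeff_rogers_szego_Phi[OF assms] rogers_szego_coeff_eq_0)

definition rogers_szego_inv_coeff :: "real \<Rightarrow> nat \<Rightarrow> nat \<Rightarrow> real" where
  "rogers_szego_inv_coeff q m t = qbinom q m t * sqrt q ^ ((m - t)\<^sup>2)"

lemma rogers_szego_inv_coeff_eq_0: "m < t \<Longrightarrow> rogers_szego_inv_coeff q m t = 0"
  by (simp add: rogers_szego_inv_coeff_def qbinom_eq_0)

lemma rogers_szego_inv_coeff_mult_coeff:
  assumes "0 < q" "q \<noteq> 1" "k \<le> t" "t \<le> m"
  shows "rogers_szego_inv_coeff q m t * rogers_szego_coeff q t k
       = qbinom q m k * (-1) ^ (m - k) * sqrt q ^ (m - k)
         * ((-1) ^ (m - t) * qbinom q (m - k) (m - t) * q ^ ((m - t) choose 2))"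
proof -
  have q: "\<bar>q\<bar> \<noteq> 1" using assms by simp
  define N v where "N = m - k" and "v = m - t"
  have v: "v \<le> N" "t - k = N - v" using assms(3,4) by (auto simp: N_def v_def)
  have binom: "qbinom q m t * qbinom q t k = qbinom q m k * qbinom q N v"
    using qbinom_mult[OF q assms(3,4)] unfolding v(2) N_def[symmetric] qbinom_symmetric[OF q v(1)] .
  have sign: "(-1) ^ (N - v) = ((-1) ^ N * (-1) ^ v :: real)"
    using v by (simp add: power_diff_conv_inverse)
  have "v\<^sup>2 + (N - v) = N + 2 * (v choose 2)"
    using v square_eq_double_choose_two_add[of v] by linarith
  then have "sqrt q ^ v\<^sup>2 * sqrt q ^ (N - v) = sqrt q ^ (N + 2 * (v choose 2))"
    by (simp flip: power_add)
  also have "\<dots> = sqrt q ^ N * q ^ (v choose 2)"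
    using assms by (simp add: power_add power_mult)
  finally have power: "sqrt q ^ v\<^sup>2 * sqrt q ^ (N - v) = sqrt q ^ N * q ^ (v choose 2)" .
  show ?thesis
    unfolding rogers_szego_inv_coeff_def rogers_szego_coeff_def v(2) N_def[symmetric] v_def[symmetric]
    using binom sign power by (simp add: algebra_simps)
qed

lemma rogers_szego_inv_coeff_sum:
  assumes "0 < q" "q \<noteq> 1"
  shows "(\<Sum>t\<le>m. rogers_szego_inv_coeff q m t * rogers_szego_coeff q t k) = (if k = m then 1 else 0)"
proof (cases "k \<le> m")
  case False
  then show ?thesis by (auto simp: rogers_szego_coeff_eq_0 intro!: sum.neutral)
next
  case True
  have q: "\<bar>q\<bar> \<noteq> 1" using assms by simp
  define N where "N = m - k"
  define f where "f t = rogers_szego_inv_coeff q m t * rogers_szego_coeff q t k" for t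
  have "(\<Sum>t\<le>m. f t) = (\<Sum>t\<in>{k..m}. f t)"
    by (rule sum.mono_neutral_right) (auto simp: f_def rogers_szego_coeff_eq_0)
  also have "\<dots> = (\<Sum>v\<le>N. f (m - v))"
    by (rule sum.reindex_bij_witness[where i = "\<lambda>v. m - v" and j = "\<lambda>t. m - t"])
      (use True in \<open>auto simp: N_def\<close>)
  also have "\<dots> = qbinom q m k * (-1) ^ N * sqrt q ^ N
                   * (\<Sum>v\<le>N. (-1) ^ v * qbinom q N v * q ^ (v choose 2))"
    unfolding sum_distrib_left f_def N_def
    by (intro sum.cong refl) (use True in \<open>simp add: rogers_szego_inv_coeff_mult_coeff[OF assms]\<close>)
  also have "\<dots> = (if k = m then 1 else 0)"
    using qbinom_alternating_sum[OF q, of N] q True by (auto simp: N_def)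
  finally show ?thesis by (simp add: f_def)
qed

lemma rogers_szego_coeff_eq_powr:
  assumes "0 < q" "k \<le> r"
  shows "rogers_szego_coeff q r k = (-1) ^ (r - k) * qbinom q r k * q powr ((real r - real k) / 2)"
  using powr_half_eq_sqrt_power[OF assms(1), of "r - k"] assms(2)
  by (simp add: rogers_szego_coeff_def)

lemma rogers_szego_inv_coeff_eq_powr:
  assumes "0 < q"
  shows "rogers_szego_inv_coeff q m t = qbinom q m t * q powr ((real m - real t)\<^sup>2 / 2)"
proof (cases "t \<le> m")
  case True
  then show ?thesis
    using powr_half_eq_sqrt_power[OF assms, of "(m - t)\<^sup>2"]
    by (simp add: rogers_szego_inv_coeff_def)
qed (simp add: rogers_szego_inv_coeff_def qbinom_eq_0)

lemma monom_eq_sum_rogers_szego_Phi: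
  assumes "0 < q" "q \<noteq> 1"
  shows "monom 1 m = (\<Sum>t\<le>m. smult (complex_of_real (rogers_szego_inv_coeff q m t))
                                  (opuc_Phi (rogers_szego_alpha q) t))"
proof (rule poly_eqI)
  fix k
  have "coeff (\<Sum>t\<le>m. smult (complex_of_real (rogers_szego_inv_coeff q m t))
                              (opuc_Phi (rogers_szego_alpha q) t)) k
      = complex_of_real (\<Sum>t\<le>m. rogers_szego_inv_coeff q m t * rogers_szego_coeff q t k)"
    by (simp add: coeff_sum coeff_rogers_szego_Phi[OF assms])
  then show "coeff (monom 1 m) k = coeff (\<Sum>t\<le>m. smult (complex_of_real (rogers_szego_inv_coeff q m t))
                              (opuc_Phi (rogers_szego_alpha q) t)) k"
    by (simp add: rogers_szego_inv_coeff_sum[OF assms])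
qed

theorem proposition4p14:
  fixes q :: real and c :: "int \<Rightarrow> complex" and \<kappa> :: "nat \<Rightarrow> real"
    and n r s :: nat
  assumes "0 < q" and "q < 1"
    and "c 0 = 1"
    and "\<And>k. \<kappa> k > 0"
    and "\<And>m k. opuc_ip c (opuc_Phi (rogers_szego_alpha q) m) (opuc_Phi (rogers_szego_alpha q) k)
                 = (if m = k then complex_of_real (\<kappa> k) else 0)"
  shows "opuc_mu c (rogers_szego_alpha q) n r s =
    complex_of_real (\<Sum>j\<le>r. (-1) ^ (r - j) * qbinom q r j * qbinom q (n + j) s
        * q powr ((real r - real j) / 2)
        * q powr ((real (n + j) - real s) ^ 2 / 2))"
proof -
  have q: "0 < q" "q \<noteq> 1" using assms(1,2) by auto
  have "opuc_mu c (rogers_szego_alpha q) n r s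
      = cnj (\<Sum>j\<le>r. complex_of_real (rogers_szego_coeff q r j)
                     * complex_of_real (rogers_szego_inv_coeff q (n + j) s))"
    using assms(4)[of s]
    by (intro opuc_mu_eq_connection_sum[where \<kappa> = "\<lambda>k. complex_of_real (\<kappa> k)"] assms(5)
        rogers_szego_Phi_eq_sum[OF q] monom_eq_sum_rogers_szego_Phi[OF q])
      (auto simp: rogers_szego_inv_coeff_eq_0)
  also have "\<dots> = complex_of_real (\<Sum>j\<le>r. rogers_szego_coeff q r j * rogers_szego_inv_coeff q (n + j) s)"
    by simp
  finally show ?thesis
    by (simp add: rogers_szego_coeff_eq_powr rogers_szego_inv_coeff_eq_powr q(1) mult_ac)
qed

end
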